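(* Fix integers $d\geq 2$ and $n\geq d+2$. Let $X=\{x_i\}_{i\in[n]}$ be a configuration in the unit sphere $S^{d-1}\subseteq\mathbb{R}^d$, and suppose there exists a partition $[n]=A\sqcup B$ with $A,B$ nonempty such that $K:=\operatorname{conv}\{x_i\}_{i\in A}\cap\operatorname{conv}\{x_i\}_{i\in B}$ is nonempty and $0\notin K$. Then $\delta(X)<1$.
   Context: $[n]=\{1,\ldots,n\}$. For a configuration $X=\{x_i\}_{i\in[n]}$ in $S^{d-1}$, $\delta(X):=\min_{j\in[n]}\operatorname{dist}(x_j,\operatorname{conv}\{x_i\}_{i\in[n]\setminus\{j\}})$, with Euclidean distance. *)

theory Defs
  imports "HOL-Analysis.Analysis"
begin

definition delta :: "nat \<Rightarrow> (nat \<Rightarrow> 'a::euclidean_space) \<Rightarrow> real" where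
  "delta n x = Min ((\<lambda>j. infdist (x j) (convex hull (x ` ({1..n} - {j})))) ` {1..n})"

end

theory Submission
  imports Defs
begin

(* Pick p in K. As p lies in the hull of the A-points, some x_j with j in A satisfies
   <x_j, p> >= |p|^2, so |x_j - p|^2 = 1 - 2 <x_j, p> + |p|^2 <= 1 - |p|^2 < 1 since p \<noteq> 0.
   As p also lies in the hull of the B-points, it is a point of the hull of the x_i with
   i \<noteq> j, at distance less than 1 from x_j. *)

lemma convex_hull_ex_inner_ge:
  fixes p v :: "'a::real_inner"
  assumes "p \<in> convex hull S"
  shows "\<exists>y\<in>S. inner p v \<le> inner y v"
proof (rule ccontr)
  assume "\<not> ?thesis"
  then have "S \<subseteq> {y. inner v y < inner p v}"
    by (auto simp: not_le inner_commute)
  then have "convex hull S \<subseteq> {y. inner v y < inner p v}"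
    by (rule hull_minimal) (rule convex_halfspace_lt)
  then show False
    using assms by (auto simp: inner_commute)
qed

lemma dist_unit_lt_1_if_inner_ge:
  fixes y p :: "'a::real_inner"
  assumes "norm y = 1" and "p \<noteq> 0" and "inner p p \<le> inner y p"
  shows "dist y p < 1"
proof -
  have "0 < inner p p" and "inner y y = 1"
    using assms(1,2) by (simp_all add: norm_eq_1)
  have "(dist y p)\<^sup>2 = inner y y - 2 * inner y p + inner p p"
    by (simp add: dist_norm power2_norm_eq_inner inner_diff_left inner_diff_right inner_commute)
  also have "\<dots> < 1"
    using assms(3) \<open>0 < inner p p\<close> \<open>inner y y = 1\<close> by linarith
  finally show ?thesis
    by (simp add: power2_less_imp_less)
qed

lemma delta_le_infdist:
  assumes "j \<in> {1..n}"
  shows "delta n x \<le> infdist (x j) (convex hull (x ` ({1..n} - {j})))"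
  unfolding delta_def using assms by (intro Min_le) auto

theorem lemma3:
  fixes x :: "nat \<Rightarrow> 'a::euclidean_space" and n :: nat and A B :: "nat set"
  assumes "DIM('a) \<ge> 2"
    and "n \<ge> DIM('a) + 2"
    and "\<forall>i\<in>{1..n}. norm (x i) = 1"
    and "A \<union> B = {1..n}" and "A \<inter> B = {}" and "A \<noteq> {}" and "B \<noteq> {}"
    and "convex hull (x ` A) \<inter> convex hull (x ` B) \<noteq> {}"
    and "0 \<notin> convex hull (x ` A) \<inter> convex hull (x ` B)"
  shows "delta n x < 1"
proof -
  obtain p where pA: "p \<in> convex hull (x ` A)" and pB: "p \<in> convex hull (x ` B)"
    using assms(8) by blast
  then have "p \<noteq> 0"
    using assms(9) by blast
  obtain j where "j \<in> A" and "inner p p \<le> inner (x j) p"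
    using convex_hull_ex_inner_ge [OF pA] by blast
  then have j: "j \<in> {1..n}"
    using assms(4) by blast
  have "dist (x j) p < 1"
    using j assms(3) \<open>p \<noteq> 0\<close> \<open>inner p p \<le> inner (x j) p\<close>
    by (intro dist_unit_lt_1_if_inner_ge) auto
  have "x ` B \<subseteq> x ` ({1..n} - {j})"
    using \<open>j \<in> A\<close> assms(4,5) by blast
  then have "p \<in> convex hull (x ` ({1..n} - {j}))"
    using pB hull_mono by blast
  then have "infdist (x j) (convex hull (x ` ({1..n} - {j}))) \<le> dist (x j) p"
    by (rule infdist_le)
  then show ?thesis
    using delta_le_infdist [OF j, where x = x] \<open>dist (x j) p < 1\<close> by linarith
qed

end
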